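(* Consider a system of $k$ parallel $M/M/1$ queues, each with finite capacity $C'$, arrival rate $\mu$ and service rate $\lambda$ per server, where arriving customers join a queue of currently shortest length and are turned away if all queues are full. Let $\epsilon_{n_1, \ldots, n_k}$ be the steady-state probability that there are $n_i$ people in queue $i$ for $i \in \{1, \ldots, k\}$, and let $\zeta_{m_0, m_1, \ldots, m_{C'}}$ be the steady-state probability that there are $m_j$ queues with exactly $j$ customers, for $j \in \{0, 1, \ldots, C'\}$, so that $$\epsilon_{n_1, \ldots, n_k} = \frac{1}{\binom{k}{m_0, \ldots, m_{C'}}} \zeta_{m_0, \ldots, m_{C'}}$$ if $m_j = \sum_{i = 1}^k \mathbf{1}\{n_i = j \}$ for all $j \in \{0, \ldots, C'\}$. Then the $\zeta$ steady-state probabilities satisfy $$\Big(\mathbf{1}\{m_{C'} < k\}\frac{\mu}{\lambda} + (k - m_0) \Big) \zeta_{m_0, m_1, \ldots, m_{C'}} = \sum_{i = 1}^{C'} (m_i + 1) \zeta_{m_0, \ldots, m_{i-2}, m_{i-1} - 1, m_i + 1, \ldots, m_{C'}} + \frac{\mu}{\lambda} \big[\zeta_{m_0 + 1, m_1 - 1, m_2, \ldots, m_{C'}} + \zeta_{0, m_1 + 1, m_2 - 1, \ldots, m_{C'}} + \cdots + \zeta_{0, \ldots, 0, m_{C'-1} + 1, m_{C'} - 1} \big],$$ with $\zeta_{m_0, \ldots, m_{C'}} = 0$ unless $\sum_{j = 0}^{C'} m_j = k$ and $m_j \in \{0, \ldots, k\}$ for all $j$.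
   Context: $\binom{k}{m_0,\ldots,m_{C'}}=\frac{k!}{m_0!\cdots m_{C'}!}$ is the multinomial coefficient. The capacity $C'$ of each queue includes the customer being served. Arrivals form a Poisson process of rate $\mu$; each server has exponential service times with rate $\lambda$. *)

theory Defs
  imports Complex_Main
begin

definition jsq_states :: "nat \<Rightarrow> nat \<Rightarrow> (nat \<Rightarrow> nat) set" where
  "jsq_states k C = {n. (\<forall>i<k. n i \<le> C) \<and> (\<forall>i\<ge>k. n i = 0)}"

definition jsq_minlen :: "nat \<Rightarrow> (nat \<Rightarrow> nat) \<Rightarrow> nat" where
  "jsq_minlen k n = Min (n ` {..<k})"

definition jsq_rate :: "nat \<Rightarrow> nat \<Rightarrow> real \<Rightarrow> real \<Rightarrow> (nat \<Rightarrow> nat) \<Rightarrow> (nat \<Rightarrow> nat) \<Rightarrow> real" where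
  "jsq_rate k C mu lam n n' =
     (\<Sum>i<k. (if 0 < n i \<and> n' = n(i := n i - 1) then lam else 0)
           + (if n i < C \<and> n i = jsq_minlen k n \<and> n' = n(i := n i + 1)
              then mu / real (card {j. j < k \<and> n j = jsq_minlen k n}) else 0))"

definition jsq_stationary :: "nat \<Rightarrow> nat \<Rightarrow> real \<Rightarrow> real \<Rightarrow> ((nat \<Rightarrow> nat) \<Rightarrow> real) \<Rightarrow> bool" where
  "jsq_stationary k C mu lam eps \<longleftrightarrow>
     (\<forall>n\<in>jsq_states k C. 0 \<le> eps n) \<and>
     (\<Sum>n\<in>jsq_states k C. eps n) = 1 \<and>
     (\<forall>n\<in>jsq_states k C.
        eps n * (\<Sum>n'\<in>jsq_states k C - {n}. jsq_rate k C mu lam n n')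
        = (\<Sum>n'\<in>jsq_states k C - {n}. eps n' * jsq_rate k C mu lam n' n))"

definition jsq_count :: "nat \<Rightarrow> (nat \<Rightarrow> nat) \<Rightarrow> nat \<Rightarrow> nat" where
  "jsq_count k n j = card {i. i < k \<and> n i = j}"

text \<open>Indices m are integer-valued (so that m j - 1 may be negative, in which case
  zeta vanishes); values m j for j > C are irrelevant.\<close>
definition jsq_zeta :: "nat \<Rightarrow> nat \<Rightarrow> ((nat \<Rightarrow> nat) \<Rightarrow> real) \<Rightarrow> (nat \<Rightarrow> int) \<Rightarrow> real" where
  "jsq_zeta k C eps m =
     (\<Sum>n\<in>jsq_states k C. if (\<forall>j\<le>C. int (jsq_count k n j) = m j) then eps n else 0)"

end

theory Submission
  imports Defs
begin

text \<open>Sum the global balance equations over all states with occupancy profile m. Every such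
  state is left at the same total rate lam (k - m 0) + mu [m C < k], so the outflow is this rate
  times zeta m. A state enters the class by a departure from a queue of length v exactly when its
  profile is m with one queue moved from level v - 1 back to level v; it has m v + 1 such queues,
  each served at rate lam. It enters by an arrival exactly when its shortest queues have some
  length j - 1 and its profile is m with one queue moved from level j back to level j - 1; since
  every shortest queue leads to the same profile, the arrival happens at total rate mu however
  ties are broken. Dividing by lam gives the recursion.\<close>

definition has_profile :: "nat \<Rightarrow> nat \<Rightarrow> (nat \<Rightarrow> int) \<Rightarrow> (nat \<Rightarrow> nat) \<Rightarrow> bool" where
  "has_profile k C m n \<longleftrightarrow> (\<forall>j\<le>C. int (jsq_count k n j) = m j)"

definition departure_source :: "(nat \<Rightarrow> int) \<Rightarrow> nat \<Rightarrow> nat \<Rightarrow> int" where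
  "departure_source m v = m(v - 1 := m (v - 1) - 1, v := m v + 1)"

text \<open>An arrival joins a shortest queue; if that queue had length j - 1, no queue was shorter,
  hence the zero entries below j - 1.\<close>

definition arrival_source :: "(nat \<Rightarrow> int) \<Rightarrow> nat \<Rightarrow> nat \<Rightarrow> int" where
  "arrival_source m j =
     (\<lambda>l. if l < j - 1 then 0 else if l = j - 1 then m l + 1 else if l = j then m l - 1 else m l)"

lemma balance_sum_subset:
  fixes q :: "'s \<Rightarrow> 's \<Rightarrow> real"
  assumes "finite S" and "A \<subseteq> S"
    and balance: "\<And>n. n \<in> S \<Longrightarrow> p n * (\<Sum>n'\<in>S - {n}. q n n') = (\<Sum>n'\<in>S - {n}. p n' * q n' n)"
  shows "(\<Sum>n\<in>A. p n * (\<Sum>n'\<in>S - {n}. q n n')) = (\<Sum>x\<in>S. p x * (\<Sum>n\<in>A - {x}. q x n))"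
proof -
  have "(\<Sum>n\<in>A. p n * (\<Sum>n'\<in>S - {n}. q n n')) = (\<Sum>n\<in>A. \<Sum>x\<in>S - {n}. p x * q x n)"
    using assms(2) by (intro sum.cong refl balance) blast
  also have "\<dots> = (\<Sum>n\<in>A. \<Sum>x\<in>{x. x \<in> S \<and> x \<noteq> n}. p x * q x n)"
    by (simp only: set_diff_eq singleton_iff)
  also have "\<dots> = (\<Sum>x\<in>S. \<Sum>n\<in>{n. n \<in> A \<and> x \<noteq> n}. p x * q x n)"
    using finite_subset[OF assms(2,1)] assms(1) by (rule sum.swap_restrict)
  also have "\<dots> = (\<Sum>x\<in>S. p x * (\<Sum>n\<in>A - {x}. q x n))"
    by (simp only: sum_distrib_left set_diff_eq singleton_iff eq_commute)
  finally show ?thesis .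
qed

lemma finite_jsq_states: "finite (jsq_states k C)"
proof -
  have "jsq_states k C = {n. \<forall>i. (i \<in> {..<k} \<longrightarrow> n i \<in> {..C}) \<and> (i \<notin> {..<k} \<longrightarrow> n i = 0)}"
    unfolding jsq_states_def lessThan_iff atMost_iff not_less all_conj_distrib ..
  also have "finite \<dots>"
    by (intro finite_set_of_finite_funs finite_atMost finite_lessThan)
  finally show ?thesis .
qed

lemma fun_upd_in_jsq_states:
  assumes "n \<in> jsq_states k C" and "i < k" and "w \<le> C" and "w \<noteq> n i"
  shows "n(i := w) \<in> jsq_states k C - {n}"
  using assms by (auto simp: jsq_states_def fun_upd_idem_iff)

lemma int_jsq_count: "int (jsq_count k n l) = (\<Sum>i<k. of_bool (n i = l))"
  by (simp add: jsq_count_def sum.If_cases Int_def)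

lemma int_jsq_count_fun_upd:
  assumes "i < k"
  shows "int (jsq_count k (n(i := w)) l) = int (jsq_count k n l) - of_bool (n i = l) + of_bool (w = l)"
proof -
  have "(\<Sum>i'\<in>{..<k} - {i}. of_bool ((n(i := w)) i' = l)) = (\<Sum>i'\<in>{..<k} - {i}. (of_bool (n i' = l) :: int))"
    by (rule sum.cong) auto
  then show ?thesis
    using assms by (simp only: int_jsq_count sum.remove[OF finite_lessThan, of i] lessThan_iff fun_upd_same)
qed

lemma sum_jsq_count:
  assumes "n \<in> jsq_states k C"
  shows "(\<Sum>l\<le>C. int (jsq_count k n l)) = int k"
proof -
  have "(\<Sum>l\<le>C. int (jsq_count k n l)) = (\<Sum>i<k. \<Sum>l\<le>C. of_bool (n i = l))"
    by (simp only: int_jsq_count sum.swap[of _ "{..C}"])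
  also have "\<dots> = (\<Sum>i<k. 1)"
    using assms by (intro sum.cong) (auto simp: jsq_states_def)
  finally show ?thesis by simp
qed

lemma has_profile_fun_upd_iff:
  assumes "i < k"
  shows "has_profile k C m (n(i := w)) \<longleftrightarrow>
    (\<forall>l\<le>C. int (jsq_count k n l) - of_bool (n i = l) + of_bool (w = l) = m l)"
  using assms by (simp add: has_profile_def int_jsq_count_fun_upd)

lemma sum_if_const_lessThan:
  "(\<Sum>i<k. if P i then c else 0) = real (card {i. i < (k::nat) \<and> P i}) * (c :: real)"
  by (simp add: sum.If_cases Int_def)

lemma jsq_minlen_attained: "0 < k \<Longrightarrow> \<exists>i<k. n i = jsq_minlen k n"
proof -
  assume "0 < k"
  then have "jsq_minlen k n \<in> n ` {..<k}"
    unfolding jsq_minlen_def by (intro Min_in) auto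
  then show ?thesis
    by auto
qed

lemma jsq_minlen_le: "i < k \<Longrightarrow> jsq_minlen k n \<le> n i"
  unfolding jsq_minlen_def by (intro Min_le) auto

lemma jsq_minlen_less_iff:
  assumes n: "n \<in> jsq_states k C" and k: "0 < k"
  shows "jsq_minlen k n < C \<longleftrightarrow> jsq_count k n C < k"
proof -
  let ?full = "{i. i < k \<and> n i = C}"
  have "jsq_minlen k n < C \<longleftrightarrow> (\<exists>i<k. n i < C)"
    using jsq_minlen_attained[OF k, of n] jsq_minlen_le[of _ k n] by (metis le_less_trans)
  also have "\<dots> \<longleftrightarrow> ?full \<noteq> {..<k}"
    using n by (auto simp: jsq_states_def order.order_iff_strict)
  also have "\<dots> \<longleftrightarrow> card ?full < card {..<k}"
    by (metis (no_types, lifting) card_subset_eq finite_lessThan lessThan_iff mem_Collect_eq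
        psubset_card_mono psubsetI subsetI less_irrefl)
  finally show ?thesis
    by (simp add: jsq_count_def)
qed

lemma sum_delta_guarded:
  assumes "finite S" and "P \<Longrightarrow> t \<in> S"
  shows "(\<Sum>x\<in>S. if t = x then (if P \<and> Q x then c else 0) else 0) = (if P \<and> Q t then c else 0)"
  using assms by (cases P) simp_all

lemma sum_jsq_rate_restrict:
  assumes n: "n \<in> jsq_states k C"
  shows "(\<Sum>n'\<in>jsq_states k C - {n}. if Q n' then jsq_rate k C mu lam n n' else 0) =
    (\<Sum>i<k. (if 0 < n i \<and> Q (n(i := n i - 1)) then lam else 0)
         + (if n i < C \<and> n i = jsq_minlen k n \<and> Q (n(i := n i + 1))
            then mu / real (card {j. j < k \<and> n j = jsq_minlen k n}) else 0))"
proof -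
  let ?S = "jsq_states k C - {n}"
  let ?c = "mu / real (card {j. j < k \<and> n j = jsq_minlen k n})"
  have "(\<Sum>n'\<in>?S. if Q n' then jsq_rate k C mu lam n n' else 0) =
      (\<Sum>n'\<in>?S. \<Sum>i<k. (if n(i := n i - 1) = n' then (if 0 < n i \<and> Q n' then lam else 0) else 0)
        + (if n(i := n i + 1) = n' then (if (n i < C \<and> n i = jsq_minlen k n) \<and> Q n' then ?c else 0) else 0))"
    unfolding jsq_rate_def by (intro sum.cong refl) (auto intro!: sum.cong sum.neutral)
  also have "\<dots> = (\<Sum>i<k. (\<Sum>n'\<in>?S. if n(i := n i - 1) = n' then (if 0 < n i \<and> Q n' then lam else 0) else 0)
        + (\<Sum>n'\<in>?S. if n(i := n i + 1) = n' then (if (n i < C \<and> n i = jsq_minlen k n) \<and> Q n' then ?c else 0) else 0))"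
    by (simp only: sum.swap[of _ ?S] sum.distrib)
  also have "\<dots> = (\<Sum>i<k. (if 0 < n i \<and> Q (n(i := n i - 1)) then lam else 0)
         + (if (n i < C \<and> n i = jsq_minlen k n) \<and> Q (n(i := n i + 1)) then ?c else 0))"
  proof (intro sum.cong refl arg_cong2[where f = "(+)"] sum_delta_guarded)
    fix i
    assume "i \<in> {..<k}"
    then show "0 < n i \<Longrightarrow> n(i := n i - 1) \<in> ?S" and "n i < C \<and> n i = jsq_minlen k n \<Longrightarrow> n(i := n i + 1) \<in> ?S"
      using n fun_upd_in_jsq_states[OF n] by (auto simp: jsq_states_def)
  qed (use finite_jsq_states in blast)+
  finally show ?thesis
    by (simp only: conj_assoc)
qed

lemma sum_jsq_arrival_rate:
  assumes "0 < k"
  shows "(\<Sum>i<k. if n i < C \<and> n i = jsq_minlen k n \<and> X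
            then mu / real (card {j. j < k \<and> n j = jsq_minlen k n}) else 0)
     = (if jsq_minlen k n < C \<and> X then mu else 0)"
proof -
  let ?M = "{j. j < k \<and> n j = jsq_minlen k n}"
  have "?M \<noteq> {}"
    using jsq_minlen_attained[OF assms, of n] by auto
  then have "real (card ?M) \<noteq> 0"
    by simp
  show ?thesis
  proof (cases "jsq_minlen k n < C \<and> X")
    case True
    then have "{i. i < k \<and> n i < C \<and> n i = jsq_minlen k n \<and> X} = ?M"
      by auto
    then show ?thesis
      using True \<open>real (card ?M) \<noteq> 0\<close> by (simp only: sum_if_const_lessThan) simp
  next
    case False
    then have "{i. i < k \<and> n i < C \<and> n i = jsq_minlen k n \<and> X} = {}"
      by auto
    then show ?thesis
      using False by (simp only: sum_if_const_lessThan) simp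
  qed
qed

lemma jsq_total_rate:
  assumes n: "n \<in> jsq_states k C" and k: "0 < k"
  shows "(\<Sum>n'\<in>jsq_states k C - {n}. jsq_rate k C mu lam n n') =
     lam * (real k - real (jsq_count k n 0)) + (if jsq_count k n C < k then mu else 0)"
proof -
  have departures: "(\<Sum>i<k. if 0 < n i then lam else 0) = lam * (real k - real (jsq_count k n 0))"
  proof -
    have "(\<Sum>i<k. if 0 < n i then lam else 0) = (\<Sum>i<k. lam - (if n i = 0 then lam else 0))"
      by (intro sum.cong) auto
    then show ?thesis
      by (simp add: sum_subtractf sum_if_const_lessThan jsq_count_def algebra_simps)
  qed
  have arrivals: "(\<Sum>i<k. if n i < C \<and> n i = jsq_minlen k n
      then mu / real (card {j. j < k \<and> n j = jsq_minlen k n}) else 0) = (if jsq_count k n C < k then mu else 0)"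
    using sum_jsq_arrival_rate[OF k, of n C True mu] by (simp add: jsq_minlen_less_iff[OF n k])
  have "(\<Sum>n'\<in>jsq_states k C - {n}. jsq_rate k C mu lam n n') =
      (\<Sum>n'\<in>jsq_states k C - {n}. if True then jsq_rate k C mu lam n n' else 0)"
    by simp
  also have "\<dots> = (\<Sum>i<k. if 0 < n i then lam else 0) + (\<Sum>i<k. if n i < C \<and> n i = jsq_minlen k n
      then mu / real (card {j. j < k \<and> n j = jsq_minlen k n}) else 0)"
    by (simp only: sum_jsq_rate_restrict[OF n] sum.distrib simp_thms)
  finally show ?thesis
    by (simp only: departures arrivals)
qed

lemma sum_lessThan_eq_sum_jsq_count:
  assumes "\<forall>i<k. n i \<le> C"
  shows "(\<Sum>i<k. F (n i)) = (\<Sum>v\<le>C. real (jsq_count k n v) * (F v :: real))"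
proof -
  have "(\<Sum>i<k. F (n i)) = (\<Sum>i<k. \<Sum>v\<le>C. if n i = v then F v else 0)"
    using assms by (intro sum.cong) auto
  also have "\<dots> = (\<Sum>v\<le>C. \<Sum>i<k. if n i = v then F v else 0)"
    by (rule sum.swap)
  also have "\<dots> = (\<Sum>v\<le>C. real (jsq_count k n v) * F v)"
    by (simp only: sum_if_const_lessThan jsq_count_def)
  finally show ?thesis .
qed

lemma has_profile_departure_iff:
  assumes "i < k" and "0 < n i"
  shows "has_profile k C m (n(i := n i - 1)) \<longleftrightarrow> has_profile k C (departure_source m (n i)) n"
proof -
  have "int (jsq_count k n l) - of_bool (n i = l) + of_bool (n i - 1 = l) = m l
      \<longleftrightarrow> int (jsq_count k n l) = departure_source m (n i) l" for l
    using assms(2) by (auto simp: departure_source_def)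
  then show ?thesis
    unfolding has_profile_fun_upd_iff[OF assms(1)] unfolding has_profile_def by (simp only:)
qed

lemma sum_departure_rate_into_profile:
  assumes "n \<in> jsq_states k C"
  shows "(\<Sum>i<k. if 0 < n i \<and> has_profile k C m (n(i := n i - 1)) then lam else 0)
     = lam * (\<Sum>v=1..C. real_of_int (m v + 1) * of_bool (has_profile k C (departure_source m v) n))"
proof -
  let ?F = "\<lambda>v. if 0 < v \<and> has_profile k C (departure_source m v) n then lam else 0"
  have "(\<Sum>i<k. if 0 < n i \<and> has_profile k C m (n(i := n i - 1)) then lam else 0) = (\<Sum>i<k. ?F (n i))"
  proof (intro sum.cong refl)
    fix i
    assume "i \<in> {..<k}"
    then show "(if 0 < n i \<and> has_profile k C m (n(i := n i - 1)) then lam else 0) = ?F (n i)"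
      using has_profile_departure_iff[of i k n C m] by auto
  qed
  also have "\<dots> = (\<Sum>v\<le>C. real (jsq_count k n v) * ?F v)"
    using assms by (intro sum_lessThan_eq_sum_jsq_count) (simp add: jsq_states_def)
  also have "\<dots> = (\<Sum>v=1..C. real (jsq_count k n v) * ?F v)"
    by (simp add: atMost_atLeast0 sum.atLeast_Suc_atMost)
  also have "\<dots> = (\<Sum>v=1..C. lam * (real_of_int (m v + 1) * of_bool (has_profile k C (departure_source m v) n)))"
  proof (intro sum.cong refl)
    fix v
    assume v: "v \<in> {1..C}"
    show "real (jsq_count k n v) * ?F v
        = lam * (real_of_int (m v + 1) * of_bool (has_profile k C (departure_source m v) n))"
    proof (cases "has_profile k C (departure_source m v) n")
      case True
      then have "int (jsq_count k n v) = m v + 1"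
        using v by (auto simp: has_profile_def departure_source_def)
      then have "real (jsq_count k n v) = real_of_int (m v + 1)"
        by (metis of_int_of_nat_eq)
      then show ?thesis
        using True v by simp
    qed simp
  qed
  finally show ?thesis
    by (simp only: sum_distrib_left)
qed

lemma sum_arrival_source:
  assumes "1 \<le> j" and "j \<le> C"
  shows "(\<Sum>l\<le>C. arrival_source m j l) = (\<Sum>l\<le>C. m l) - (\<Sum>l<j-1. m l)"
proof -
  have "(\<Sum>l\<le>C. arrival_source m j l) =
      (\<Sum>l\<le>C. m l - (if l < j - 1 then m l else 0) + of_bool (l = j - 1) - of_bool (l = j))"
    using assms(1) by (intro sum.cong) (auto simp: arrival_source_def)
  also have "\<dots> = (\<Sum>l\<le>C. m l) - (\<Sum>l\<le>C. if l < j - 1 then m l else 0)"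
    using assms by (simp add: sum.distrib sum_subtractf)
  also have "(\<Sum>l\<le>C. if l < j - 1 then m l else 0) = (\<Sum>l<j-1. m l)"
    using assms by (intro sum.mono_neutral_cong_right) auto
  finally show ?thesis .
qed

lemma jsq_count_below_minlen: "l < jsq_minlen k n \<Longrightarrow> jsq_count k n l = 0"
  unfolding jsq_count_def using jsq_minlen_le[of _ k n] by fastforce

lemma jsq_count_pos: "i < k \<Longrightarrow> 0 < jsq_count k n (n i)"
  unfolding jsq_count_def by (auto simp: card_gt_0_iff)

lemma has_profile_arrival_source_zero_below:
  assumes n: "n \<in> jsq_states k C" and prof: "has_profile k C (arrival_source m j) n"
    and m_nonneg: "\<forall>l\<le>C. 0 \<le> m l" and m_sum: "(\<Sum>l\<le>C. m l) = int k"
    and j: "1 \<le> j" "j \<le> C" and l: "l < j - 1"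
  shows "m l = 0"
proof -
  have "(\<Sum>l\<le>C. arrival_source m j l) = (\<Sum>l\<le>C. int (jsq_count k n l))"
    using prof by (intro sum.cong) (simp_all add: has_profile_def)
  txt \<open>Both profiles count k queues, which forces m to vanish below j - 1.\<close>
  then have "(\<Sum>l<j-1. m l) = 0"
    using sum_arrival_source[OF j, of m] sum_jsq_count[OF n] m_sum by simp
  then show ?thesis
    using l m_nonneg j by (subst (asm) sum_nonneg_eq_0_iff) auto
qed

lemma has_profile_arrival_source_minlen:
  assumes n: "n \<in> jsq_states k C" and i: "i < k" "n i = jsq_minlen k n"
    and prof: "has_profile k C (arrival_source m j) n"
    and m_nonneg: "\<forall>l\<le>C. 0 \<le> m l" and j: "1 \<le> j" "j \<le> C"
  shows "n i = j - 1"
proof -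
  have c: "int (jsq_count k n l) = arrival_source m j l" if "l \<le> C" for l
    using prof that by (simp add: has_profile_def)
  have "int (jsq_count k n (j - 1)) = m (j - 1) + 1"
    using c j by (simp add: arrival_source_def)
  moreover have "0 \<le> m (j - 1)"
    using m_nonneg j by simp
  ultimately have "\<not> j - 1 < n i"
    using jsq_count_below_minlen[of "j - 1" k n] i(2) by auto
  moreover have "\<not> n i < j - 1"
  proof
    assume "n i < j - 1"
    moreover have "n i \<le> C"
      using n i(1) by (simp add: jsq_states_def)
    ultimately have "jsq_count k n (n i) = 0"
      using c[of "n i"] by (simp add: arrival_source_def)
    with jsq_count_pos[OF i(1), of n] show False
      by simp
  qed
  ultimately show ?thesis
    by simp
qed

lemma has_profile_arrival_source_iff:
  assumes n: "n \<in> jsq_states k C" and i: "i < k" "n i = jsq_minlen k n"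
    and m_nonneg: "\<forall>l\<le>C. 0 \<le> m l" and m_sum: "(\<Sum>l\<le>C. m l) = int k"
    and j: "1 \<le> j" "j \<le> C"
  shows "has_profile k C (arrival_source m j) n \<longleftrightarrow> j = n i + 1 \<and> has_profile k C m (n(i := n i + 1))"
  unfolding has_profile_fun_upd_iff[OF i(1)]
proof
  assume prof: "has_profile k C (arrival_source m j) n"
  have "n i = j - 1"
    by (rule has_profile_arrival_source_minlen[OF n i prof m_nonneg j])
  then show "j = n i + 1 \<and> (\<forall>l\<le>C. int (jsq_count k n l) - of_bool (n i = l) + of_bool (n i + 1 = l) = m l)"
    using prof has_profile_arrival_source_zero_below[OF n prof m_nonneg m_sum j] j
    by (auto simp: has_profile_def arrival_source_def)
next
  assume R: "j = n i + 1 \<and> (\<forall>l\<le>C. int (jsq_count k n l) - of_bool (n i = l) + of_bool (n i + 1 = l) = m l)"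
  show "has_profile k C (arrival_source m j) n"
    unfolding has_profile_def
  proof (intro allI impI)
    fix l
    assume "l \<le> C"
    then show "int (jsq_count k n l) = arrival_source m j l"
      using R jsq_count_below_minlen[of l k n] i(2) by (cases "l < n i") (auto simp: arrival_source_def)
  qed
qed

lemma sum_arrival_rate_into_profile:
  assumes n: "n \<in> jsq_states k C" and k: "0 < k"
    and m_nonneg: "\<forall>l\<le>C. 0 \<le> m l" and m_sum: "(\<Sum>l\<le>C. m l) = int k"
  shows "(\<Sum>i<k. if n i < C \<and> n i = jsq_minlen k n \<and> has_profile k C m (n(i := n i + 1))
            then mu / real (card {j. j < k \<and> n j = jsq_minlen k n}) else 0)
     = mu * (\<Sum>j=1..C. of_bool (has_profile k C (arrival_source m j) n))"
proof -
  obtain i0 where i0: "i0 < k" "n i0 = jsq_minlen k n"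
    using jsq_minlen_attained[OF k] by blast
  let ?G = "has_profile k C m (n(i0 := n i0 + 1))"
  have same: "has_profile k C m (n(i := n i + 1)) \<longleftrightarrow> ?G" if "i < k" "n i = jsq_minlen k n" for i
    using that i0 by (simp add: has_profile_fun_upd_iff)
  have "(\<Sum>i<k. if n i < C \<and> n i = jsq_minlen k n \<and> has_profile k C m (n(i := n i + 1))
            then mu / real (card {j. j < k \<and> n j = jsq_minlen k n}) else 0)
      = (\<Sum>i<k. if n i < C \<and> n i = jsq_minlen k n \<and> ?G
            then mu / real (card {j. j < k \<and> n j = jsq_minlen k n}) else 0)"
    using same by (intro sum.cong refl) auto
  also have "\<dots> = (if jsq_minlen k n < C \<and> ?G then mu else 0)"
    by (rule sum_jsq_arrival_rate[OF k])
  also have "\<dots> = mu * (\<Sum>j=1..C. if j = n i0 + 1 then of_bool ?G else 0)"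
    using i0 by auto
  also have "\<dots> = mu * (\<Sum>j=1..C. of_bool (has_profile k C (arrival_source m j) n))"
    using has_profile_arrival_source_iff[OF n i0 m_nonneg m_sum] by (intro arg_cong[where f = "(*) mu"] sum.cong) auto
  finally show ?thesis .
qed

lemma sum_jsq_rate_into_profile:
  assumes x: "x \<in> jsq_states k C" and k: "0 < k"
    and m_nonneg: "\<forall>l\<le>C. 0 \<le> m l" and m_sum: "(\<Sum>l\<le>C. m l) = int k"
  shows "(\<Sum>n\<in>{n \<in> jsq_states k C. has_profile k C m n} - {x}. jsq_rate k C mu lam x n)
    = lam * (\<Sum>v=1..C. real_of_int (m v + 1) * of_bool (has_profile k C (departure_source m v) x))
      + mu * (\<Sum>j=1..C. of_bool (has_profile k C (arrival_source m j) x))"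
proof -
  have "{n \<in> jsq_states k C. has_profile k C m n} - {x} = {n \<in> jsq_states k C - {x}. has_profile k C m n}"
    by blast
  moreover have "finite (jsq_states k C - {x})"
    using finite_jsq_states by blast
  ultimately have "(\<Sum>n\<in>{n \<in> jsq_states k C. has_profile k C m n} - {x}. jsq_rate k C mu lam x n)
      = (\<Sum>n\<in>jsq_states k C - {x}. if has_profile k C m n then jsq_rate k C mu lam x n else 0)"
    by (simp only: sum.inter_filter)
  then show ?thesis
    by (simp only: sum_jsq_rate_restrict[OF x] sum.distrib sum_departure_rate_into_profile[OF x]
        sum_arrival_rate_into_profile[OF x k m_nonneg m_sum])
qed

lemma jsq_zeta_eq_sum_of_bool:
  "jsq_zeta k C eps m = (\<Sum>n\<in>jsq_states k C. eps n * of_bool (has_profile k C m n))"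
  unfolding jsq_zeta_def has_profile_def by (intro sum.cong) auto

lemma jsq_outflow_from_profile:
  assumes "0 < k"
  shows "(\<Sum>n\<in>{n \<in> jsq_states k C. has_profile k C m n}. eps n * (\<Sum>n'\<in>jsq_states k C - {n}. jsq_rate k C mu lam n n'))
    = (lam * real_of_int (int k - m 0) + (if m C < int k then mu else 0)) * jsq_zeta k C eps m"
proof -
  let ?out = "lam * real_of_int (int k - m 0) + (if m C < int k then mu else 0)"
  have out: "(\<Sum>n'\<in>jsq_states k C - {n}. jsq_rate k C mu lam n n') = ?out"
    if "n \<in> jsq_states k C" and "has_profile k C m n" for n
  proof -
    have "int (jsq_count k n 0) = m 0" and "int (jsq_count k n C) = m C"
      using that(2) by (simp_all add: has_profile_def)
    then show ?thesis
      using jsq_total_rate[OF that(1) assms, of mu lam] by auto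
  qed
  have "(\<Sum>n\<in>{n \<in> jsq_states k C. has_profile k C m n}. eps n * (\<Sum>n'\<in>jsq_states k C - {n}. jsq_rate k C mu lam n n'))
      = (\<Sum>n\<in>jsq_states k C. if has_profile k C m n
           then eps n * (\<Sum>n'\<in>jsq_states k C - {n}. jsq_rate k C mu lam n n') else 0)"
    by (simp only: sum.inter_filter[OF finite_jsq_states])
  also have "\<dots> = ?out * jsq_zeta k C eps m"
    unfolding jsq_zeta_eq_sum_of_bool sum_distrib_left[of ?out] by (intro sum.cong refl) (simp add: out)
  finally show ?thesis .
qed

lemma jsq_inflow_into_profile:
  assumes "0 < k" and "\<forall>l\<le>C. 0 \<le> m l" and "(\<Sum>l\<le>C. m l) = int k"
  shows "(\<Sum>x\<in>jsq_states k C. eps x * (\<Sum>n\<in>{n \<in> jsq_states k C. has_profile k C m n} - {x}. jsq_rate k C mu lam x n))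
    = lam * (\<Sum>v=1..C. real_of_int (m v + 1) * jsq_zeta k C eps (departure_source m v))
      + mu * (\<Sum>j=1..C. jsq_zeta k C eps (arrival_source m j))"
proof -
  have "(\<Sum>x\<in>jsq_states k C. eps x * (\<Sum>n\<in>{n \<in> jsq_states k C. has_profile k C m n} - {x}. jsq_rate k C mu lam x n))
      = (\<Sum>x\<in>jsq_states k C. eps x *
          (lam * (\<Sum>v=1..C. real_of_int (m v + 1) * of_bool (has_profile k C (departure_source m v) x))
           + mu * (\<Sum>j=1..C. of_bool (has_profile k C (arrival_source m j) x))))"
    using sum_jsq_rate_into_profile[OF _ assms] by (intro sum.cong refl) simp
  also have "\<dots> = lam * (\<Sum>v=1..C. real_of_int (m v + 1) * jsq_zeta k C eps (departure_source m v))
      + mu * (\<Sum>j=1..C. jsq_zeta k C eps (arrival_source m j))"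
    unfolding jsq_zeta_eq_sum_of_bool sum_distrib_left distrib_left sum.distrib
    by (simp only: sum.swap[of _ "jsq_states k C"] ac_simps)
  finally show ?thesis .
qed

theorem lemma4:
  fixes k C :: nat and mu lam :: real and eps :: "(nat \<Rightarrow> nat) \<Rightarrow> real" and m :: "nat \<Rightarrow> int"
  assumes "1 \<le> k" and "1 \<le> C" and "0 < mu" and "0 < lam"
    and "jsq_stationary k C mu lam eps"
    and "\<forall>j\<le>C. 0 \<le> m j" and "(\<Sum>j\<le>C. m j) = int k"
  shows "((if m C < int k then mu / lam else 0) + real_of_int (int k - m 0)) * jsq_zeta k C eps m
    = (\<Sum>i=1..C. real_of_int (m i + 1) * jsq_zeta k C eps (m(i - 1 := m (i - 1) - 1, i := m i + 1)))
      + mu / lam * (\<Sum>j=1..C. jsq_zeta k C eps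
            (\<lambda>l. if l < j - 1 then 0 else if l = j - 1 then m l + 1 else if l = j then m l - 1 else m l))"
proof -
  let ?S = "jsq_states k C"
  let ?A = "{n \<in> ?S. has_profile k C m n}"
  have k: "0 < k"
    using assms(1) by simp
  have "(lam * real_of_int (int k - m 0) + (if m C < int k then mu else 0)) * jsq_zeta k C eps m
      = (\<Sum>n\<in>?A. eps n * (\<Sum>n'\<in>?S - {n}. jsq_rate k C mu lam n n'))"
    by (rule jsq_outflow_from_profile[OF k, symmetric])
  also have "\<dots> = (\<Sum>x\<in>?S. eps x * (\<Sum>n\<in>?A - {x}. jsq_rate k C mu lam x n))"
    using assms(5) finite_jsq_states by (intro balance_sum_subset) (auto simp: jsq_stationary_def)
  also have "\<dots> = lam * (\<Sum>v=1..C. real_of_int (m v + 1) * jsq_zeta k C eps (departure_source m v))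
      + mu * (\<Sum>j=1..C. jsq_zeta k C eps (arrival_source m j))"
    by (rule jsq_inflow_into_profile[OF k assms(6,7)])
  finally show ?thesis
    using assms(4) unfolding departure_source_def arrival_source_def by (auto simp: field_simps)
qed

end
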